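(* For all integers $n\geq 3$, $s_2(n)<1$, where $s_2(n)=g(n-1)+g(n+1)-f(n-1)f(n+1)$.
   Context: For integers $m\geq 2$, with $x=\pi\sqrt{m-1}$, $y=\pi\sqrt{m}$, $z=\pi\sqrt{m+1}$, define \[ f(m)=e^{x-2y+z}\frac{(x^6-x^5-1)\,y^{16}\,(z^6-z^5-1)}{x^8(y^6-y^5+1)^2z^8},\qquad g(m)=e^{x-2y+z}\frac{(x^6-x^5+1)\,y^{16}\,(z^6-z^5+1)}{x^8(y^6-y^5-1)^2z^8}. \] *)

theory Defs
  imports Complex_Main
begin

definition f :: "nat \<Rightarrow> real" where
  "f m = (let x = pi * sqrt (real m - 1); y = pi * sqrt (real m); z = pi * sqrt (real m + 1) in
     exp (x - 2*y + z) * ((x^6 - x^5 - 1) * y^16 * (z^6 - z^5 - 1))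
       / (x^8 * (y^6 - y^5 + 1)^2 * z^8))"

definition g :: "nat \<Rightarrow> real" where
  "g m = (let x = pi * sqrt (real m - 1); y = pi * sqrt (real m); z = pi * sqrt (real m + 1) in
     exp (x - 2*y + z) * ((x^6 - x^5 + 1) * y^16 * (z^6 - z^5 + 1))
       / (x^8 * (y^6 - y^5 - 1)^2 * z^8))"

definition s2 :: "nat \<Rightarrow> real" where
  "s2 n = g (n - 1) + g (n + 1) - f (n - 1) * f (n + 1)"

end

(*
  Write P u = u^6 - u^5 - 1 and x, y, z = pi sqrt (m - 1), pi sqrt m, pi sqrt (m + 1). Then
    f m = e^(x - 2y + z) P(x) P(z) / (P(y) + 2)^2 * m^8 / ((m - 1)^4 (m + 1)^4),
    g m = f m (1 + 2/P(x)) (1 + 2/P(z)) (1 + 2/P(y))^2,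
  so g m <= f m (1 + V_m) with V_m = O(m^-3). The second difference x - 2y + z is at most
  -pi / (4 m^(3/2)), while the remaining factor of f m is at most m^2 / (m^2 - 1); hence
  f m <= 1 - pi / (8 m^(3/2)) for m >= 9.
  If f(m_i) <= F_i <= 1 and g(m_i) <= f(m_i) (1 + V_i), then
  g m_1 + g m_2 - f m_1 f m_2 <= 1 - (1 - F_1)(1 - F_2) + F_1 V_1 + F_2 V_2.
  For n >= 10 the asymptotic bounds make this < 1, since (1 - F_1)(1 - F_2) ~ pi^2 / (64 n^3)
  dominates V_1 + V_2 = O(n^-3) with a smaller constant; for 3 <= n <= 9 the numbers F_i, V_i
  come from enclosures of pi sqrt k (k <= 11), with pi bracketed by Machin's formula.
*)

theory Submission
  imports Defs
begin

section \<open>Bounds on pi and on the exponential\<close>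

lemma exp_le_Maclaurin_sum:
  fixes t :: real
  assumes "t \<le> 0"
  shows "exp t \<le> (\<Sum>k<2 * n + 1. t ^ k / fact k)"
proof -
  obtain s where s:
    "exp t = (\<Sum>k<2 * n + 1. t ^ k / fact k) + exp s / fact (2 * n + 1) * t ^ (2 * n + 1)"
    using Maclaurin_exp_le[of t "2 * n + 1"] by blast
  have "t ^ (2 * n + 1) \<le> 0"
    using assms by (simp add: mult_nonpos_nonneg)
  then have "exp s / fact (2 * n + 1) * t ^ (2 * n + 1) \<le> 0"
    by (intro mult_nonneg_nonpos) auto
  with s show ?thesis
    by linarith
qed

lemma arctan_between_partial_sums:
  fixes x :: real
  assumes "0 < x" "x \<le> 1"
  defines "S j \<equiv> \<Sum>i<j. (-1) ^ i * (1 / real (i * 2 + 1) * x ^ (i * 2 + 1))"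
  shows "S (2 * k) \<le> arctan x" and "arctan x \<le> S (2 * k + 1)"
proof -
  have x1: "\<bar>x\<bar> \<le> 1"
    using assms by auto
  have "arctan x \<in> {S (2 * k) .. S (2 * k + 1)}"
    using summable_Leibniz(2)[OF zeroseq_arctan_series[OF x1] monoseq_arctan_series[OF x1]]
      arctan_series[OF x1] assms(1) unfolding S_def by simp
  then show "S (2 * k) \<le> arctan x" and "arctan x \<le> S (2 * k + 1)"
    by auto
qed

lemma pi_bounds: "3.14159265 < pi" "pi < 3.14159266"
proof -
  note a = arctan_between_partial_sums[of "1/5" 3] and b = arctan_between_partial_sums[of "1/239" 1]
  have "pi = 16 * arctan (1/5) - 4 * arctan (1/239)"
    using machin by simp
  then show "3.14159265 < pi" "pi < 3.14159266"
    using a b by (simp_all add: numeral_eq_Suc)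
qed

lemma pi_squared_ge_9: "9 \<le> pi^2"
  using pi_bounds(1) power_mono[of 3 pi 2] by simp

section \<open>Closed forms of f and g\<close>

(* In f m and g m, x, y, z are pi_sqrt (m - 1), pi_sqrt m, pi_sqrt (m + 1), and the polynomial
   factors are sextic u and sextic u + 2. *)

definition pi_sqrt :: "real \<Rightarrow> real" where
  "pi_sqrt t = pi * sqrt t"

definition sextic :: "real \<Rightarrow> real" where
  "sextic u = u^6 - u^5 - 1"

lemma pi_sqrt_ge_3: "1 \<le> t \<Longrightarrow> 3 \<le> pi_sqrt t"
  unfolding pi_sqrt_def using pi_bounds(1) mult_mono[of 3 pi 1 "sqrt t"] by simp

lemma pi_sqrt_mono: "0 \<le> s \<Longrightarrow> s \<le> t \<Longrightarrow> pi_sqrt s \<le> pi_sqrt t"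
  unfolding pi_sqrt_def by simp

lemma pi_sqrt_power2: "0 \<le> t \<Longrightarrow> pi_sqrt t ^ 2 = pi^2 * t"
  unfolding pi_sqrt_def by (simp add: power_mult_distrib)

lemma sextic_eq: "sextic u = u^5 * (u - 1) - 1"
  unfolding sextic_def by (simp add: algebra_simps eval_nat_numeral)

lemma sextic_mono: "1 \<le> u \<Longrightarrow> u \<le> v \<Longrightarrow> sextic u \<le> sextic v"
  unfolding sextic_eq by (simp add: mult_mono power_mono)

lemma sextic_pos: "2 \<le> u \<Longrightarrow> 0 < sextic u"
proof -
  assume "2 \<le> u"
  then have "2^5 * (2 - 1) \<le> u^5 * (u - 1)"
    by (intro mult_mono power_mono) auto
  then show ?thesis
    unfolding sextic_eq by simp
qed

lemma sextic_ge_half_power6: "3 \<le> u \<Longrightarrow> u^6 / 2 \<le> sextic u"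
proof -
  assume "3 \<le> u"
  then have "3^5 * (3 - 2) \<le> u^5 * (u - 2)"
    by (intro mult_mono power_mono) auto
  then show ?thesis
    unfolding sextic_def by (simp add: algebra_simps eval_nat_numeral)
qed

lemma f_g_eq:
  fixes m :: nat
  assumes "2 \<le> m"
  defines "x \<equiv> pi_sqrt (real m - 1)" and "y \<equiv> pi_sqrt (real m)"
    and "z \<equiv> pi_sqrt (real m + 1)"
    and "C \<equiv> real m^8 / ((real m - 1)^4 * (real m + 1)^4)"
  shows "f m = exp (x - 2*y + z) * (sextic x * sextic z / (sextic y + 2)^2) * C"
    and "g m = exp (x - 2*y + z) * ((sextic x + 2) * (sextic z + 2) / (sextic y)^2) * C"
proof -
  have sq: "x^2 = pi^2 * (real m - 1)" "y^2 = pi^2 * real m" "z^2 = pi^2 * (real m + 1)"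
    unfolding x_def y_def z_def using assms(1) by (simp_all add: pi_sqrt_power2)
  have "x^8 = (x^2)^4" "y^16 = (y^2)^8" "z^8 = (z^2)^4"
    by (simp_all flip: power_mult)
  then have "y^16 / (x^8 * z^8)
      = (pi^2 * real m)^8 / ((pi^2 * (real m - 1))^4 * (pi^2 * (real m + 1))^4)"
    unfolding sq by simp
  also have "\<dots> = C"
    unfolding C_def by (simp add: power_mult_distrib mult_ac flip: power_add)
  finally have C: "y^16 / (x^8 * z^8) = C" .
  show "f m = exp (x - 2*y + z) * (sextic x * sextic z / (sextic y + 2)^2) * C"
    unfolding f_def Let_def sextic_def C[symmetric] x_def y_def z_def pi_sqrt_def
    by (simp add: mult_ac add_ac)
  show "g m = exp (x - 2*y + z) * ((sextic x + 2) * (sextic z + 2) / (sextic y)^2) * C"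
    unfolding g_def Let_def sextic_def C[symmetric] x_def y_def z_def pi_sqrt_def
    by (simp add: mult_ac add_ac)
qed

lemma sextic_pi_sqrt_pos: "1 \<le> t \<Longrightarrow> 0 < sextic (pi_sqrt t)"
  using pi_sqrt_ge_3 sextic_pos by fastforce

lemma f_nonneg: "2 \<le> m \<Longrightarrow> 0 \<le> f m"
  unfolding f_g_eq by (simp add: less_imp_le sextic_pi_sqrt_pos)

lemma g_eq_f_mult:
  fixes m :: nat
  assumes "2 \<le> m"
  defines "x \<equiv> pi_sqrt (real m - 1)" and "y \<equiv> pi_sqrt (real m)"
    and "z \<equiv> pi_sqrt (real m + 1)"
  shows "g m = f m * ((1 + 2 / sextic x) * (1 + 2 / sextic z) * (1 + 2 / sextic y)^2)"
proof -
  have "sextic x > 0" "sextic y > 0" "sextic z > 0"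
    unfolding x_def y_def z_def using assms(1) by (simp_all add: sextic_pi_sqrt_pos)
  then have "(sextic x + 2) * (sextic z + 2) / (sextic y)^2
      = sextic x * sextic z / (sextic y + 2)^2
        * ((1 + 2 / sextic x) * (1 + 2 / sextic z) * (1 + 2 / sextic y)^2)"
    by (simp add: field_simps add_pos_pos)
  then show ?thesis
    unfolding f_g_eq[OF assms(1)] x_def y_def z_def by (simp add: mult_ac)
qed

section \<open>Bounding g by f\<close>

lemma one_plus_power4_le:
  fixes e :: real
  assumes "0 \<le> e" "e \<le> 1/20"
  shows "(1 + e)^4 \<le> 1 + 5 * e"
proof -
  have "e^4 \<le> e^3" "e^3 \<le> e^2"
    using assms by (simp_all add: power_decreasing)
  moreover have "e^2 \<le> e / 20"
    using mult_left_mono[OF assms(2,1)] by (simp add: power2_eq_square)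
  moreover have "(1 + e)^4 = 1 + 4*e + 6*e^2 + 4*e^3 + e^4"
    by (simp add: eval_nat_numeral algebra_simps)
  ultimately show ?thesis
    using assms by linarith
qed

lemma sextic_factors_le:
  fixes x y z :: real
  assumes "3 \<le> x" "x \<le> y" "x \<le> z"
  shows "(1 + 2 / sextic x) * (1 + 2 / sextic z) * (1 + 2 / sextic y)^2 \<le> 1 + 20 / x^6"
proof -
  define e where "e = 4 / x^6"
  have "x^6 \<ge> 3^6"
    using assms(1) by (intro power_mono) auto
  then have e: "0 \<le> e" "e \<le> 1/20"
    unfolding e_def by (auto simp: divide_le_eq)
  have factor_le: "1 + 2 / sextic u \<le> 1 + e" if "x \<le> u" for u
  proof -
    have "x^6 / 2 \<le> sextic u"
      using sextic_ge_half_power6[OF assms(1)] sextic_mono[of x u] assms(1) that by linarith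
    moreover have "0 < x^6"
      using assms(1) by simp
    ultimately have "2 / sextic u \<le> 2 / (x^6 / 2)"
      using sextic_pos[of u] assms(1) that by (intro divide_left_mono mult_pos_pos) auto
    then show ?thesis
      unfolding e_def by simp
  qed
  have factor_nonneg: "0 \<le> 1 + 2 / sextic u" if "x \<le> u" for u
    using sextic_pos[of u] assms(1) that by simp
  have "(1 + 2 / sextic x) * (1 + 2 / sextic z) * (1 + 2 / sextic y)^2
      \<le> (1 + e) * (1 + e) * (1 + e)^2"
    using factor_le factor_nonneg e assms by (intro mult_mono power_mono) auto
  also have "\<dots> = (1 + e)^4"
    by (simp add: eval_nat_numeral)
  also have "\<dots> \<le> 1 + 5 * e"
    using e by (rule one_plus_power4_le)
  finally show ?thesis
    unfolding e_def by simp
qed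

lemma g_le_f_mult:
  assumes "2 \<le> m"
  shows "g m \<le> f m * (1 + 20 / (729 * (real m - 1)^3))"
proof -
  define x where "x = pi_sqrt (real m - 1)"
  have x3: "3 \<le> x"
    unfolding x_def using assms by (simp add: pi_sqrt_ge_3)
  have "9 * (real m - 1) \<le> x^2"
    unfolding x_def using assms mult_right_mono[OF pi_squared_ge_9, of "real m - 1"]
    by (simp add: pi_sqrt_power2)
  then have "(9 * (real m - 1))^3 \<le> (x^2)^3"
    using assms by (intro power_mono) auto
  moreover have "(9 * (real m - 1))^3 = 729 * (real m - 1)^3" "(x^2)^3 = x^6"
    by (simp_all only: power_mult_distrib flip: power_mult) simp_all
  moreover have "0 < (real m - 1)^3"
    using assms by simp
  ultimately have "20 / x^6 \<le> 20 / (729 * (real m - 1)^3)"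
    using x3 by (intro divide_left_mono) auto
  then have "(1 + 2 / sextic x) * (1 + 2 / sextic (pi_sqrt (real m + 1)))
        * (1 + 2 / sextic (pi_sqrt (real m)))^2
      \<le> 1 + 20 / (729 * (real m - 1)^3)"
    using sextic_factors_le[OF x3, of "pi_sqrt (real m)" "pi_sqrt (real m + 1)"] assms
    unfolding x_def by (simp add: pi_sqrt_mono)
  then show ?thesis
    unfolding g_eq_f_mult[OF assms] x_def using f_nonneg[OF assms] by (rule mult_left_mono)
qed

section \<open>An asymptotic bound for f\<close>

lemma sqrt_neighbours_mult_le:
  fixes t :: real
  assumes "1 \<le> t"
  shows "sqrt (t - 1) * sqrt (t + 1) \<le> t"
proof -
  have "sqrt (t - 1) * sqrt (t + 1) = sqrt (t^2 - 1)"
    using assms by (simp add: power2_eq_square algebra_simps flip: real_sqrt_mult)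
  also have "\<dots> \<le> sqrt (t^2)"
    by (rule real_sqrt_le_mono) simp
  also have "\<dots> = t"
    using assms by simp
  finally show ?thesis .
qed

lemma sqrt_neighbours_add_le:
  fixes t :: real
  assumes "1 \<le> t"
  shows "sqrt (t - 1) + sqrt (t + 1) \<le> 2 * sqrt t"
proof (rule power2_le_imp_le)
  have "(sqrt (t - 1) + sqrt (t + 1))^2 = 2 * t + 2 * (sqrt (t - 1) * sqrt (t + 1))"
    using assms by (simp add: power2_sum)
  also have "\<dots> \<le> (2 * sqrt t)^2"
    using sqrt_neighbours_mult_le[OF assms] assms by (simp add: power_mult_distrib)
  finally show "(sqrt (t - 1) + sqrt (t + 1))^2 \<le> (2 * sqrt t)^2" .
qed (use assms in simp)

lemma sqrt_second_difference_le:
  fixes t :: real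
  assumes "1 \<le> t"
  shows "sqrt (t - 1) - 2 * sqrt t + sqrt (t + 1) \<le> - 1 / (4 * sqrt t ^ 3)"
proof -
  define a b c where "a = sqrt (t - 1)" and "b = sqrt t" and "c = sqrt (t + 1)"
  have sq: "a^2 = t - 1" "b^2 = t" "c^2 = t + 1"
    unfolding a_def b_def c_def using assms by simp_all
  have abc: "0 \<le> a" "1 \<le> b" "1 \<le> c" "a \<le> b"
    unfolding a_def b_def c_def using assms by simp_all
  define p where "p = (a + c) * ((c + b) * (b + a))"
  have "(a - 2*b + c) * p = -2"
    unfolding p_def using sq by algebra
  moreover have p0: "0 < p"
    unfolding p_def using abc by simp
  ultimately have "a - 2*b + c = -2 / p"
    by (simp add: field_simps)
  moreover have "p \<le> 8 * b^3"
  proof -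
    have sum_le: "a + c \<le> 2 * b" and "a * c \<le> b^2"
      unfolding a_def b_def c_def using assms sqrt_neighbours_add_le sqrt_neighbours_mult_le by simp_all
    moreover have "b * (a + c) \<le> b * (2 * b)"
      using sum_le abc by (intro mult_left_mono) auto
    moreover have "(c + b) * (b + a) = b^2 + b * (a + c) + a * c"
      by (simp add: algebra_simps power2_eq_square)
    ultimately have "(c + b) * (b + a) \<le> 4 * b^2"
      by (simp add: power2_eq_square)
    from mult_mono[OF sum_le this] have "p \<le> (2 * b) * (4 * b^2)"
      unfolding p_def using abc by simp
    then show ?thesis
      by (simp add: power2_eq_square power3_eq_cube)
  qed
  then have "2 / (8 * b^3) \<le> 2 / p"
    using p0 abc by (intro divide_left_mono) auto
  ultimately show ?thesis
    unfolding a_def b_def c_def by simp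
qed

lemma inverse_sqrt_convex:
  fixes t :: real
  assumes "1 < t"
  shows "2 / sqrt t \<le> 1 / sqrt (t - 1) + 1 / sqrt (t + 1)"
proof -
  define a b c where "a = sqrt (t - 1)" and "b = sqrt t" and "c = sqrt (t + 1)"
  have pos: "0 < a" "0 < b" "0 < c"
    unfolding a_def b_def c_def using assms by simp_all
  have "4 * (a * c) \<le> (a + c) * (a + c)"
    using zero_le_power2[of "a - c"] by (simp add: power2_eq_square algebra_simps)
  also have "\<dots> \<le> (a + c) * (2 * b)"
    unfolding a_def b_def c_def using assms sqrt_neighbours_add_le[of t] by (intro mult_left_mono) auto
  finally have "2 * (a * c) \<le> b * (a + c)"
    by simp
  then show ?thesis
    unfolding a_def[symmetric] b_def[symmetric] c_def[symmetric] using pos by (simp add: field_simps)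
qed

lemma sextic_ratio_le:
  fixes x y z :: real
  assumes "3 \<le> x" "3 \<le> y" "3 \<le> z" and convex: "2 / y \<le> 1 / x + 1 / z"
  shows "sextic x * sextic z / (sextic y + 2)^2 \<le> x^6 * z^6 / y^12"
proof -
  have amgm: "(1 - p) * (1 - q) \<le> (1 - (p + q) / 2)^2" for p q :: real
    using zero_le_power2[of "(p - q) / 2"] by (simp add: power2_eq_square field_simps)
  have "(1 - 1/x) * (1 - 1/z) \<le> (1 - (1/x + 1/z) / 2)^2"
    by (rule amgm)
  also have "\<dots> \<le> (1 - 1/y)^2"
  proof (rule power_mono)
    have "1/x \<le> 1/3" "1/z \<le> 1/3"
      using assms by (simp_all add: frac_le)
    then show "0 \<le> 1 - (1/x + 1/z) / 2"
      by simp
  qed (use convex in simp)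
  finally have key: "(1 - 1/x) * (1 - 1/z) \<le> (1 - 1/y)^2" .
  have upper: "sextic u \<le> u^6 * (1 - 1/u)" and lower: "u^6 * (1 - 1/u) \<le> sextic u + 2"
    if "3 \<le> u" for u :: real
    using that unfolding sextic_def by (simp_all add: field_simps eval_nat_numeral)
  have one_minus: "0 < 1 - 1/u" if "3 \<le> u" for u :: real
    using that by simp
  have "sextic x * sextic z \<le> (x^6 * (1 - 1/x)) * (z^6 * (1 - 1/z))"
    using assms upper one_minus sextic_pos by (intro mult_mono) (auto intro: less_imp_le)
  also have "\<dots> = x^6 * z^6 * ((1 - 1/x) * (1 - 1/z))"
    by (simp add: algebra_simps)
  also have "\<dots> \<le> x^6 * z^6 * (1 - 1/y)^2"
    using key by (intro mult_left_mono) auto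
  finally have num: "sextic x * sextic z \<le> x^6 * z^6 * (1 - 1/y)^2" .
  have den: "(y^6 * (1 - 1/y))^2 \<le> (sextic y + 2)^2"
    using lower[OF assms(2)] one_minus[OF assms(2)] assms(2) by (intro power_mono) auto
  have "sextic x * sextic z / (sextic y + 2)^2 \<le> x^6 * z^6 * (1 - 1/y)^2 / (y^6 * (1 - 1/y))^2"
    using num den one_minus[OF assms(2)] assms sextic_pos by (intro frac_le) auto
  also have "\<dots> = x^6 * z^6 / y^12"
    using one_minus[OF assms(2)] assms(2) by (simp add: power_mult_distrib flip: power_mult)
  finally show ?thesis .
qed

lemma second_order_factor_le:
  fixes u s :: real
  assumes "1 < u" "0 \<le> s" "s \<le> 1/27" "9/4 \<le> u^2 * s"
  shows "(1 - s + s^2/2) * (u^2 / ((u - 1) * (u + 1))) \<le> 1 - s/2"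
proof -
  have "9/4 * (26/27) \<le> (u^2 * s) * (1 - s)"
    using assms by (intro mult_mono) auto
  then have "1 - s/2 \<le> u^2 * s * (1 - s) / 2"
    using assms(2) by simp
  moreover have "(1 - s/2) * (u^2 - 1) - (1 - s + s^2/2) * u^2 = u^2 * s * (1 - s) / 2 - (1 - s/2)"
    by (simp add: field_simps power2_eq_square)
  ultimately have "(1 - s + s^2/2) * u^2 \<le> (1 - s/2) * (u^2 - 1)"
    by linarith
  moreover have "(u - 1) * (u + 1) = u^2 - 1"
    by (simp add: power2_eq_square algebra_simps)
  moreover have "1 < u^2"
    using assms(1) by (simp add: one_less_power)
  ultimately show ?thesis
    by (simp add: field_simps)
qed

lemma pi_sqrt_inverse_convex:
  assumes "1 < t"
  shows "2 / pi_sqrt t \<le> 1 / pi_sqrt (t - 1) + 1 / pi_sqrt (t + 1)"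
proof -
  have "2 / pi_sqrt t = (2 / sqrt t) / pi"
    unfolding pi_sqrt_def by simp
  also have "\<dots> \<le> (1 / sqrt (t - 1) + 1 / sqrt (t + 1)) / pi"
    using inverse_sqrt_convex[OF assms] by (intro divide_right_mono) auto
  also have "\<dots> = 1 / pi_sqrt (t - 1) + 1 / pi_sqrt (t + 1)"
    unfolding pi_sqrt_def by (simp add: field_simps)
  finally show ?thesis .
qed

lemma pi_sqrt_power_ratio:
  assumes "1 < t"
  shows "pi_sqrt (t - 1)^6 * pi_sqrt (t + 1)^6 / pi_sqrt t^12 * (t^8 / ((t - 1)^4 * (t + 1)^4))
    = t^2 / ((t - 1) * (t + 1))"
proof -
  have even_power: "pi_sqrt u ^ (2 * k) = (pi^2 * u)^k" if "0 \<le> u" for u k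
    using that by (simp add: power_mult pi_sqrt_power2)
  have "pi_sqrt (t - 1)^6 = (pi^2 * (t - 1))^3" "pi_sqrt (t + 1)^6 = (pi^2 * (t + 1))^3"
      "pi_sqrt t^12 = (pi^2 * t)^6"
    using assms even_power[of "t - 1" 3] even_power[of "t + 1" 3] even_power[of t 6] by simp_all
  then have "pi_sqrt (t - 1)^6 * pi_sqrt (t + 1)^6 / pi_sqrt t^12 = (t - 1)^3 * (t + 1)^3 / t^6"
    by (simp add: power_mult_distrib mult_ac flip: power_add)
  moreover have "a^3 * c^3 / t^6 * (t^8 / (a^4 * c^4)) = t^2 / (a * c)"
    if "a \<noteq> 0" "c \<noteq> 0" for a c :: real
    using that assms by (simp add: field_simps eval_nat_numeral)
  ultimately show ?thesis
    using assms by simp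
qed

lemma f_le_large:
  fixes m :: nat
  assumes "9 \<le> m"
  shows "f m \<le> 1 - pi / (8 * sqrt (real m)^3)"
proof -
  have m2: "2 \<le> m"
    using assms by simp
  define x y z
    where "x = pi_sqrt (real m - 1)" and "y = pi_sqrt (real m)" and "z = pi_sqrt (real m + 1)"
  define b where "b = sqrt (real m)"
  define s where "s = pi / (4 * b^3)"
  have b3: "3 \<le> b"
    unfolding b_def using assms real_le_rsqrt[of 3 "real m"] by simp
  have s: "0 \<le> s" "s \<le> 1/27"
    unfolding s_def using b3 pi_less_4 power_mono[OF b3, of 3] by (auto simp: field_simps)
  have "x - 2*y + z \<le> - s"
    using mult_left_mono[OF sqrt_second_difference_le[of "real m"], of pi] assms
    unfolding x_def y_def z_def s_def b_def pi_sqrt_def by (simp add: algebra_simps)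
  then have "exp (x - 2*y + z) \<le> exp (- s)"
    by simp
  also have "\<dots> \<le> 1 - s + s^2/2"
    using exp_le_Maclaurin_sum[of "- s" 1] s by (simp add: eval_nat_numeral)
  finally have E: "exp (x - 2*y + z) \<le> 1 - s + s^2/2" .
  have xyz3: "3 \<le> x" "3 \<le> y" "3 \<le> z"
    unfolding x_def y_def z_def using m2 by (simp_all add: pi_sqrt_ge_3)
  then have R: "sextic x * sextic z / (sextic y + 2)^2 \<le> x^6 * z^6 / y^12"
    using pi_sqrt_inverse_convex[of "real m"] m2 unfolding x_def y_def z_def
    by (intro sextic_ratio_le) auto
  have "0 \<le> sextic x * sextic z / (sextic y + 2)^2"
    using sextic_pos xyz3 by (simp add: less_imp_le)
  then have "f m \<le> (1 - s + s^2/2) * (x^6 * z^6 / y^12)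
                    * (real m^8 / ((real m - 1)^4 * (real m + 1)^4))"
    unfolding f_g_eq[OF m2, folded x_def y_def z_def]
    using E R order_trans[OF exp_ge_zero E] m2 by (intro mult_right_mono mult_mono) auto
  also have "\<dots> = (1 - s + s^2/2) * (real m^2 / ((real m - 1) * (real m + 1)))"
    using pi_sqrt_power_ratio[of "real m"] m2 unfolding x_def y_def z_def by (simp only: mult.assoc)
  also have "\<dots> \<le> 1 - s/2"
  proof (rule second_order_factor_le)
    have "real m^2 * s = pi * b / 4"
      unfolding s_def b_def using m2 by (simp add: field_simps eval_nat_numeral)
    moreover have "9/4 \<le> pi * b / 4"
      using mult_mono[of 3 pi 3 b] pi_bounds(1) b3 by simp
    ultimately show "9/4 \<le> real m^2 * s"
      by simp
  qed (use m2 s in auto)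
  finally show ?thesis
    unfolding s_def b_def by simp
qed

section \<open>Numerical bounds for small arguments\<close>

lemma pi_sqrt_ge_of_square:
  assumes "0 \<le> t" "l^2 \<le> 3.14159265^2 * t"
  shows "l \<le> pi_sqrt t"
proof -
  have "l \<le> sqrt (l^2)"
    by simp
  also have "\<dots> \<le> sqrt (3.14159265^2 * t)"
    using assms(2) by (rule real_sqrt_le_mono)
  also have "\<dots> \<le> pi_sqrt t"
    unfolding pi_sqrt_def using assms(1) mult_right_mono[of "3.14159265" pi "sqrt t"] pi_bounds(1)
    by (simp add: real_sqrt_mult)
  finally show ?thesis .
qed

lemma pi_sqrt_le_of_square:
  assumes "0 \<le> t" "0 \<le> u" "3.14159266^2 * t \<le> u^2"
  shows "pi_sqrt t \<le> u"
proof -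
  have "pi_sqrt t \<le> sqrt (3.14159266^2 * t)"
    unfolding pi_sqrt_def using assms(1) mult_right_mono[of pi "3.14159266" "sqrt t"] pi_bounds(2)
    by (simp add: real_sqrt_mult)
  also have "\<dots> \<le> sqrt (u^2)"
    using assms(3) by (rule real_sqrt_le_mono)
  finally show ?thesis
    using assms(2) by simp
qed

lemma f_le_of_enclosure:
  fixes m :: nat and xu yl zu F :: real
  defines "t \<equiv> xu - 2 * yl + zu"
  assumes m: "2 \<le> m"
    and x: "pi_sqrt (real m - 1) \<le> xu" and y: "yl \<le> pi_sqrt (real m)"
    and z: "pi_sqrt (real m + 1) \<le> zu"
    and "1 \<le> yl" "t \<le> 0"
    and bound: "(1 + t + t^2/2 + t^3/6 + t^4/24) * (sextic xu * sextic zu / (sextic yl + 2)^2)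
                * (real m^8 / ((real m - 1)^4 * (real m + 1)^4)) \<le> F"
  shows "f m \<le> F"
proof -
  define x y z
    where "x = pi_sqrt (real m - 1)" and "y = pi_sqrt (real m)" and "z = pi_sqrt (real m + 1)"
  have xyz3: "3 \<le> x" "3 \<le> y" "3 \<le> z"
    unfolding x_def y_def z_def using m by (simp_all add: pi_sqrt_ge_3)
  have "exp (x - 2*y + z) \<le> exp t"
    using x y z unfolding x_def y_def z_def t_def by simp
  also have "\<dots> \<le> 1 + t + t^2/2 + t^3/6 + t^4/24"
    using exp_le_Maclaurin_sum[OF \<open>t \<le> 0\<close>, of 2]
    by (simp add: eval_nat_numeral fact_numeral)
  finally have E: "exp (x - 2*y + z) \<le> 1 + t + t^2/2 + t^3/6 + t^4/24" .
  have Px: "0 \<le> sextic x" "sextic x \<le> sextic xu"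
    using sextic_pos[of x] sextic_mono[of x xu] xyz3 x unfolding x_def by auto
  have Pz: "0 \<le> sextic z" "sextic z \<le> sextic zu"
    using sextic_pos[of z] sextic_mono[of z zu] xyz3 z unfolding z_def by auto
  have "0 \<le> yl^5 * (yl - 1)"
    using \<open>1 \<le> yl\<close> by simp
  then have Qy: "0 < sextic yl + 2" "sextic yl + 2 \<le> sextic y + 2"
    using sextic_eq[of yl] sextic_mono[of yl y] \<open>1 \<le> yl\<close> y unfolding y_def by linarith+
  have "sextic x * sextic z / (sextic y + 2)^2 \<le> sextic xu * sextic zu / (sextic yl + 2)^2"
    using Px Pz Qy by (intro frac_le mult_mono power_mono mult_nonneg_nonneg) auto
  moreover have "0 \<le> sextic x * sextic z / (sextic y + 2)^2"
    using Px Pz by simp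
  ultimately have "f m \<le> (1 + t + t^2/2 + t^3/6 + t^4/24)
                * (sextic xu * sextic zu / (sextic yl + 2)^2)
                * (real m^8 / ((real m - 1)^4 * (real m + 1)^4))"
    unfolding f_g_eq[OF m, folded x_def y_def z_def]
    using E order_trans[OF exp_ge_zero E] m by (intro mult_right_mono mult_mono) auto
  then show ?thesis
    using bound by linarith
qed

lemma g_le_of_enclosure:
  fixes m :: nat and xl yl zl V :: real
  assumes m: "2 \<le> m"
    and "xl \<le> pi_sqrt (real m - 1)" "yl \<le> pi_sqrt (real m)" "zl \<le> pi_sqrt (real m + 1)"
    and "3 \<le> xl" "3 \<le> yl" "3 \<le> zl"
    and bound: "(1 + 2 / sextic xl) * (1 + 2 / sextic zl) * (1 + 2 / sextic yl)^2 \<le> 1 + V"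
  shows "g m \<le> f m * (1 + V)"
proof -
  have factor_le: "1 + 2 / sextic u \<le> 1 + 2 / sextic l" "0 \<le> 1 + 2 / sextic u"
    if "3 \<le> l" "l \<le> u" for l u
    using sextic_pos[of l] sextic_pos[of u] sextic_mono[of l u] that by (simp_all add: frac_le)
  have "(1 + 2 / sextic (pi_sqrt (real m - 1))) * (1 + 2 / sextic (pi_sqrt (real m + 1)))
        * (1 + 2 / sextic (pi_sqrt (real m)))^2
      \<le> (1 + 2 / sextic xl) * (1 + 2 / sextic zl) * (1 + 2 / sextic yl)^2"
    using factor_le assms by (intro mult_mono power_mono) auto
  also have "\<dots> \<le> 1 + V"
    by (rule bound)
  finally show ?thesis
    unfolding g_eq_f_mult[OF m] using f_nonneg[OF m] by (rule mult_left_mono)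
qed

(* The enclosures are roundings of pi_sqrt k to seven decimals; the bounds are the resulting
   left-hand sides of the hypothesis bound, rounded up. *)

lemma f_2_le: "f 2 \<le> 0.910981"
  by (rule f_le_of_enclosure[where xu = "3.1415927" and yl = "4.4428829" and zu = "5.4413982"])
    (rule pi_sqrt_le_of_square pi_sqrt_ge_of_square | simp add: sextic_def power_divide)+

lemma f_3_le: "f 3 \<le> 0.940416"
  by (rule f_le_of_enclosure[where xu = "4.442883" and yl = "5.441398" and zu = "6.2831854"])
    (rule pi_sqrt_le_of_square pi_sqrt_ge_of_square | simp add: sextic_def power_divide)+

lemma f_4_le: "f 4 \<le> 0.955379"
  by (rule f_le_of_enclosure[where xu = "5.4413982" and yl = "6.2831853" and zu = "7.0248148"])
    (rule pi_sqrt_le_of_square pi_sqrt_ge_of_square | simp add: sextic_def power_divide)+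

lemma f_5_le: "f 5 \<le> 0.964839"
  by (rule f_le_of_enclosure[where xu = "6.2831854" and yl = "7.0248147" and zu = "7.695299"])
    (rule pi_sqrt_le_of_square pi_sqrt_ge_of_square | simp add: sextic_def power_divide)+

lemma f_6_le: "f 6 \<le> 0.971317"
  by (rule f_le_of_enclosure[where xu = "7.0248148" and yl = "7.6952989" and zu = "8.3118729"])
    (rule pi_sqrt_le_of_square pi_sqrt_ge_of_square | simp add: sextic_def power_divide)+

lemma f_7_le: "f 7 \<le> 0.975993"
  by (rule f_le_of_enclosure[where xu = "7.695299" and yl = "8.3118728" and zu = "8.8857659"])
    (rule pi_sqrt_le_of_square pi_sqrt_ge_of_square | simp add: sextic_def power_divide)+

lemma f_8_le: "f 8 \<le> 0.979504"
  by (rule f_le_of_enclosure[where xu = "8.3118729" and yl = "8.8857658" and zu = "9.424778"])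
    (rule pi_sqrt_le_of_square pi_sqrt_ge_of_square | simp add: sextic_def power_divide)+

lemma f_9_le: "f 9 \<le> 0.982221"
  by (rule f_le_of_enclosure[where xu = "8.8857659" and yl = "9.4247779" and zu = "9.9345883"])
    (rule pi_sqrt_le_of_square pi_sqrt_ge_of_square | simp add: sextic_def power_divide)+

lemma f_10_le: "f 10 \<le> 0.984378"
  by (rule f_le_of_enclosure[where xu = "9.424778" and yl = "9.9345882" and zu = "10.4194841"])
    (rule pi_sqrt_le_of_square pi_sqrt_ge_of_square | simp add: sextic_def power_divide)+

lemma g_2_le: "g 2 \<le> f 2 * (1 + 0.00382455)"
  by (rule g_le_of_enclosure[where xl = "3.1415926" and yl = "4.4428829" and zl = "5.441398"])
    (rule pi_sqrt_ge_of_square | simp add: sextic_def power_divide)+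

lemma g_3_le: "g 3 \<le> f 3 * (1 + 0.00056319)"
  by (rule g_le_of_enclosure[where xl = "4.4428829" and yl = "5.441398" and zl = "6.2831853"])
    (rule pi_sqrt_ge_of_square | simp add: sextic_def power_divide)+

lemma g_4_le: "g 4 \<le> f 4 * (1 + 0.00019114)"
  by (rule g_le_of_enclosure[where xl = "5.441398" and yl = "6.2831853" and zl = "7.0248147"])
    (rule pi_sqrt_ge_of_square | simp add: sextic_def power_divide)+

lemma add_sub_mult_lt_one:
  fixes a b A B F1 F2 V1 V2 :: real
  assumes "a \<le> F1" "b \<le> F2" "A \<le> a * (1 + V1)" "B \<le> b * (1 + V2)"
    and "0 \<le> a" "0 \<le> b" "F1 \<le> 1" "F2 \<le> 1" "0 \<le> V1" "0 \<le> V2"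
    and margin: "F1 * V1 + F2 * V2 < (1 - F1) * (1 - F2)"
  shows "A + B - a * b < 1"
proof -
  define X where "X a b = (1 - a) * (1 - b) - a * V1 - b * V2" for a b
  have "X F1 b \<le> X a b"
    using mult_nonneg_nonneg[of "F1 - a" "1 - b + V1"] assms unfolding X_def
    by (simp add: algebra_simps)
  moreover have "X F1 F2 \<le> X F1 b"
    using mult_nonneg_nonneg[of "F2 - b" "1 - F1 + V2"] assms unfolding X_def
    by (simp add: algebra_simps)
  moreover have "0 < X F1 F2"
    using margin unfolding X_def by simp
  moreover have "A + B - a * b \<le> 1 - X a b"
    using assms(3,4) unfolding X_def by (simp add: algebra_simps)
  ultimately show ?thesis
    by linarith
qed

lemma s2_lt_1_small:
  assumes "3 \<le> n" "n \<le> 9"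
  shows "s2 n < 1"
proof -
  \<comment> \<open>The uniform bound g_le_f_mult is too weak only for m = 2, 3, 4.\<close>
  have "g 2 + g 4 - f 2 * f 4 < 1"
    by (rule add_sub_mult_lt_one[OF f_2_le f_4_le g_2_le g_4_le]) (simp_all add: f_nonneg)
  moreover have "g 3 + g 5 - f 3 * f 5 < 1"
    by (rule add_sub_mult_lt_one[OF f_3_le f_5_le g_3_le g_le_f_mult]) (simp_all add: f_nonneg)
  moreover have "g 4 + g 6 - f 4 * f 6 < 1"
    by (rule add_sub_mult_lt_one[OF f_4_le f_6_le g_4_le g_le_f_mult]) (simp_all add: f_nonneg)
  moreover have "g 5 + g 7 - f 5 * f 7 < 1"
    by (rule add_sub_mult_lt_one[OF f_5_le f_7_le g_le_f_mult g_le_f_mult]) (simp_all add: f_nonneg)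
  moreover have "g 6 + g 8 - f 6 * f 8 < 1"
    by (rule add_sub_mult_lt_one[OF f_6_le f_8_le g_le_f_mult g_le_f_mult]) (simp_all add: f_nonneg)
  moreover have "g 7 + g 9 - f 7 * f 9 < 1"
    by (rule add_sub_mult_lt_one[OF f_7_le f_9_le g_le_f_mult g_le_f_mult]) (simp_all add: f_nonneg)
  moreover have "g 8 + g 10 - f 8 * f 10 < 1"
    by (rule add_sub_mult_lt_one[OF f_8_le f_10_le g_le_f_mult g_le_f_mult]) (simp_all add: f_nonneg)
  moreover have "n \<in> {3, 4, 5, 6, 7, 8, 9}"
    using assms by auto
  ultimately show ?thesis
    by (auto simp: s2_def)
qed

lemma cubic_margin:
  fixes N :: real
  assumes "10 \<le> N"
  shows "40 / (729 * (N - 2)^3) < 9 / (64 * N^3)"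
proof -
  have "(4 * N)^3 \<le> (5 * (N - 2))^3"
    using assms by (intro power_mono) auto
  moreover have "(4 * N)^3 = 64 * N^3" "(5 * (N - 2))^3 = 125 * (N - 2)^3"
    by (simp_all only: power_mult_distrib) simp_all
  ultimately have "64 * N^3 \<le> 125 * (N - 2)^3"
    by simp
  moreover have "0 < (N - 2)^3" "0 < N^3"
    using assms by simp_all
  ultimately have "40 * (64 * N^3) < 9 * (729 * (N - 2)^3)"
    by linarith
  with \<open>0 < (N - 2)^3\<close> \<open>0 < N^3\<close> show ?thesis
    by (simp add: divide_simps)
qed

lemma large_case_margin:
  fixes N :: real
  assumes N: "10 \<le> N"
  defines "F1 \<equiv> 1 - pi / (8 * sqrt (N - 1)^3)" and "F2 \<equiv> 1 - pi / (8 * sqrt (N + 1)^3)"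
    and "V1 \<equiv> 20 / (729 * (N - 2)^3)" and "V2 \<equiv> 20 / (729 * N^3)"
  shows "F1 * V1 + F2 * V2 < (1 - F1) * (1 - F2)"
proof -
  define b1 b2 where "b1 = sqrt (N - 1)" and "b2 = sqrt (N + 1)"
  have b: "0 < b1" "0 < b2"
    unfolding b1_def b2_def using N by simp_all
  have V: "0 \<le> V2" "V2 \<le> V1"
    unfolding V1_def V2_def using N by (auto intro!: divide_left_mono power_mono)
  have "F1 \<le> 1" "F2 \<le> 1"
    unfolding F1_def F2_def using N by simp_all
  then have "F1 * V1 + F2 * V2 \<le> V1 + V2"
    using mult_right_mono[of F1 1 V1] mult_right_mono[of F2 1 V2] V by simp
  also have "\<dots> \<le> 40 / (729 * (N - 2)^3)"
    using V unfolding V1_def by simp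
  also have "\<dots> < 9 / (64 * N^3)"
    using N by (rule cubic_margin)
  also have "\<dots> \<le> pi^2 / (64 * (b1 * b2)^3)"
  proof (rule frac_le)
    have "b1 * b2 \<le> N"
      unfolding b1_def b2_def using N sqrt_neighbours_mult_le[of N] by simp
    then show "64 * (b1 * b2)^3 \<le> 64 * N^3"
      using b by (simp add: power_mono)
  qed (use b pi_squared_ge_9 in auto)
  also have "\<dots> = (1 - F1) * (1 - F2)"
    unfolding F1_def F2_def b1_def b2_def by (simp add: power_mult_distrib power2_eq_square)
  finally show ?thesis .
qed

lemma s2_lt_1_large:
  assumes "10 \<le> n"
  shows "s2 n < 1"
proof -
  define N where "N = real n"
  have N: "10 \<le> N" "real (n - 1) = N - 1" "real (n + 1) = N + 1"
    unfolding N_def using assms by auto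
  have "f (n - 1) \<le> 1 - pi / (8 * sqrt (N - 1)^3)" "f (n + 1) \<le> 1 - pi / (8 * sqrt (N + 1)^3)"
    using f_le_large[of "n - 1", unfolded N(2)] f_le_large[of "n + 1", unfolded N(3)] assms
    by simp_all
  moreover have "g (n - 1) \<le> f (n - 1) * (1 + 20 / (729 * (N - 2)^3))"
      "g (n + 1) \<le> f (n + 1) * (1 + 20 / (729 * N^3))"
    using g_le_f_mult[of "n - 1", unfolded N(2)] g_le_f_mult[of "n + 1", unfolded N(3)] assms
    by simp_all
  ultimately have "g (n - 1) + g (n + 1) - f (n - 1) * f (n + 1) < 1"
    using large_case_margin[OF N(1)] N(1) assms
    by (intro add_sub_mult_lt_one) (auto intro: f_nonneg)
  then show ?thesis
    unfolding s2_def .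
qed

theorem theorem2p5:
  fixes n :: nat
  assumes "n \<ge> 3"
  shows "s2 n < 1"
  using assms s2_lt_1_small s2_lt_1_large by (cases "n \<le> 9") auto

end
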